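(* Let $D$ be a finite set with $|D|\ge2$, $k\ge2$, and let $P:D^k\to\{0,1\}$ be a $k$-ary predicate with $P^{-1}(1)=\{(a,a,\dots,a)\}$ for some $a\in D$. Then for every weighted directed $k$-uniform hypergraph $H=(V,E,w)$, every $0<\varepsilon<1$, and every $\varepsilon$-$P$-sparsifier $H_\varepsilon=(V,E_\varepsilon,w_\varepsilon)$ of $H$, we have $|E_\varepsilon|=\Omega(|E|)$, with the implied constant independent of $H$ and $\varepsilon$.
   Context: A weighted directed $k$-uniform hypergraph $H=(V,E,w)$ has $E$ a set of ordered $k$-tuples of distinct vertices and $w:E\to\mathbb{R}_{>0}$. For $A:V\to D$, $\mathrm{Val}_{H,P}(A)=\sum_{e\in E}w(e)P(A(e))$ with $A$ applied entrywise. An $\varepsilon$-$P$-sparsifier of $H$ is $H_\varepsilon=(V,E_\varepsilon,w_\varepsilon)$ with $E_\varepsilon\subseteq E$, $w_\varepsilon:E_\varepsilon\to\mathbb{R}_{>0}$, such that for every $A:V\to D$, $(1-\varepsilon)\mathrm{Val}_{H,P}(A)\le\mathrm{Val}_{H_\varepsilon,P}(A)\le(1+\varepsilon)\mathrm{Val}_{H,P}(A)$. *)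

theory Defs
  imports Main "HOL.Real"
begin

definition wdhg :: "nat \<Rightarrow> 'v set \<Rightarrow> 'v list set \<Rightarrow> ('v list \<Rightarrow> real) \<Rightarrow> bool" where
  "wdhg k V E w \<longleftrightarrow> finite V \<and>
     (\<forall>e\<in>E. length e = k \<and> distinct e \<and> set e \<subseteq> V \<and> w e > 0)"

definition val :: "'v list set \<Rightarrow> ('v list \<Rightarrow> real) \<Rightarrow> ('d list \<Rightarrow> real) \<Rightarrow> ('v \<Rightarrow> 'd) \<Rightarrow> real" where
  "val E w P A = (\<Sum>e\<in>E. w e * P (map A e))"

definition is_sparsifier ::
  "'d set \<Rightarrow> ('d list \<Rightarrow> real) \<Rightarrow> real \<Rightarrow> 'v set \<Rightarrow> 'v list set \<Rightarrow> ('v list \<Rightarrow> real)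
   \<Rightarrow> 'v list set \<Rightarrow> ('v list \<Rightarrow> real) \<Rightarrow> bool" where
  "is_sparsifier D P \<epsilon> V E w Ee we \<longleftrightarrow> Ee \<subseteq> E \<and> (\<forall>e\<in>Ee. we e > 0) \<and>
     (\<forall>A :: 'v \<Rightarrow> 'd. A ` V \<subseteq> D \<longrightarrow>
        (1 - \<epsilon>) * val E w P A \<le> val Ee we P A \<and> val Ee we P A \<le> (1 + \<epsilon>) * val E w P A)"

end

theory Submission
  imports Defs
begin

text \<open>Test each edge \<open>e\<close> of \<open>H\<close> with the assignment that is \<open>a\<close> on the vertices of \<open>e\<close> and
  some \<open>b \<noteq> a\<close> elsewhere. It satisfies \<open>e\<close>, so its value is positive, and a sparsifier with
  \<open>\<epsilon> < 1\<close> must keep an edge satisfied by it, i.e. an edge whose vertices all lie in \<open>e\<close>; by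
  distinctness that edge has the same vertex set as \<open>e\<close>. A set of \<open>k\<close> vertices carries at most
  \<open>k\<^sup>k\<close> edges, so \<open>|E| \<le> k\<^sup>k |E\<^sub>\<epsilon>|\<close>.\<close>

lemma wdhg_finite_edges:
  assumes "wdhg k V E w"
  shows "finite E"
  by (rule finite_subset[OF _ finite_lists_length_eq[of V k]])
     (use assms in \<open>auto simp: wdhg_def\<close>)

lemma map_indicator_eq_replicate_iff:
  assumes "a \<noteq> b"
  shows "map (\<lambda>x. if x \<in> S then a else b) xs = replicate (length xs) a \<longleftrightarrow> set xs \<subseteq> S"
  using assms by (induction xs) auto

lemma sparsifier_keeps_satisfied_edge:
  assumes "is_sparsifier D P \<epsilon> V E w Ee we" and "\<epsilon> < 1" and "A ` V \<subseteq> D"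
    and "val E w P A > 0"
  obtains f where "f \<in> Ee" and "P (map A f) \<noteq> 0"
proof -
  have "(1 - \<epsilon>) * val E w P A \<le> val Ee we P A"
    using assms(1,3) by (auto simp: is_sparsifier_def)
  moreover have "(1 - \<epsilon>) * val E w P A > 0"
    using assms(2,4) by simp
  ultimately have "(\<Sum>f\<in>Ee. we f * P (map A f)) \<noteq> 0"
    unfolding val_def by linarith
  then obtain f where "f \<in> Ee" "we f * P (map A f) \<noteq> 0"
    by (rule sum.not_neutral_contains_not_neutral)
  then show ?thesis using that by simp
qed

lemma sparsifier_keeps_vertex_set:
  fixes P :: "'d list \<Rightarrow> real"
  assumes "a \<in> D" "b \<in> D" "b \<noteq> a"
    and P01: "\<forall>x. length x = k \<and> set x \<subseteq> D \<longrightarrow> P x \<in> {0, 1}"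
    and P1: "\<forall>x. length x = k \<and> set x \<subseteq> D \<longrightarrow> (P x = 1 \<longleftrightarrow> x = replicate k a)"
    and H: "wdhg k V E w" and "\<epsilon> < 1" and sp: "is_sparsifier D P \<epsilon> V E w Ee we"
    and e: "e \<in> E"
  shows "\<exists>f\<in>Ee. set f = set e"
proof -
  define A where "A = (\<lambda>x. if x \<in> set e then a else b)"
  have AV: "A ` V \<subseteq> D" using assms(1,2) by (auto simp: A_def)
  have edge: "length f = k" "distinct f" "set f \<subseteq> V" "w f > 0" if "f \<in> E" for f
    using H that by (auto simp: wdhg_def)
  have P_cases: "P (map A f) \<in> {0, 1}"
    and P_one_iff: "P (map A f) = 1 \<longleftrightarrow> set f \<subseteq> set e" if "f \<in> E" for f
  proof -
    have dom: "length (map A f) = k" "set (map A f) \<subseteq> D"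
      using edge[OF that] AV by auto
    show "P (map A f) \<in> {0, 1}" using P01 dom by blast
    show "P (map A f) = 1 \<longleftrightarrow> set f \<subseteq> set e"
      using P1 dom map_indicator_eq_replicate_iff[of a b "set e" f] assms(3) edge(1)[OF that]
      unfolding A_def by auto
  qed
  have "w e * P (map A e) \<le> val E w P A"
    unfolding val_def
  proof (rule member_le_sum[OF e _ wdhg_finite_edges[OF H]])
    show "0 \<le> w f * P (map A f)" if "f \<in> E - {e}" for f
      using P_cases[of f] edge(4)[of f] that by auto
  qed
  then have "val E w P A > 0"
    using P_one_iff[OF e] edge(4)[OF e] by simp
  then obtain f where f: "f \<in> Ee" "P (map A f) \<noteq> 0"
    using sparsifier_keeps_satisfied_edge[OF sp \<open>\<epsilon> < 1\<close> AV] by blast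
  have fE: "f \<in> E" using f(1) sp by (auto simp: is_sparsifier_def)
  then have "set f \<subseteq> set e" using P_cases P_one_iff f(2) by auto
  moreover have "card (set f) = card (set e)"
    using edge(1,2) fE e by (simp add: distinct_card)
  ultimately have "set f = set e" by (simp add: card_subset_eq)
  with f(1) show ?thesis by blast
qed

lemma card_le_card_cover_mult_pow:
  assumes "finite F" and "\<forall>f\<in>F. length f = k"
    and "\<forall>e\<in>E. length e = k \<and> (\<exists>f\<in>F. set e \<subseteq> set f)"
  shows "card E \<le> card F * k ^ k"
proof -
  define S where "S f = {xs. set xs \<subseteq> set f \<and> length xs = k}" for f :: "'a list"
  have "E \<subseteq> (\<Union>f\<in>F. S f)" using assms(3) by (auto simp: S_def)
  then have "card E \<le> card (\<Union>f\<in>F. S f)"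
    by (rule card_mono[rotated]) (auto simp: S_def assms(1) intro!: finite_lists_length_eq)
  also have "\<dots> \<le> (\<Sum>f\<in>F. card (S f))" by (rule card_UN_le[OF assms(1)])
  also have "\<dots> \<le> (\<Sum>f\<in>F. k ^ k)"
  proof (rule sum_mono)
    fix f assume "f \<in> F"
    then have "card (set f) \<le> k" using assms(2) card_length by metis
    then show "card (S f) \<le> k ^ k"
      unfolding S_def by (simp add: card_lists_length_eq power_mono)
  qed
  finally show ?thesis by simp
qed

theorem proposition18:
  fixes D :: "'d set" and P :: "'d list \<Rightarrow> real" and k :: nat and a :: 'd
  assumes "finite D" and "card D \<ge> 2" and "k \<ge> 2" and "a \<in> D"
    and "\<forall>x. length x = k \<and> set x \<subseteq> D \<longrightarrow> P x \<in> {0, 1}"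
    and "\<forall>x. length x = k \<and> set x \<subseteq> D \<longrightarrow> (P x = 1 \<longleftrightarrow> x = replicate k a)"
  shows "\<exists>c > 0. \<forall>(V :: 'v set) E w \<epsilon> Ee we.
           wdhg k V E w \<and> 0 < \<epsilon> \<and> \<epsilon> < 1 \<and> is_sparsifier D P \<epsilon> V E w Ee we
           \<longrightarrow> real (card Ee) \<ge> c * real (card E)"
proof -
  have "\<exists>b\<in>D. b \<noteq> a"
    using assms(2,4) card_le_Suc0_iff_eq[of D] by (cases "finite D") (auto, metis)
  then obtain b where b: "b \<in> D" "b \<noteq> a" by blast
  have k_pow_pos: "real k ^ k > 0" by (cases "k = 0") simp_all
  show ?thesis
  proof (intro exI[of _ "1 / real k ^ k"] conjI allI impI)
    show "0 < 1 / real k ^ k" using k_pow_pos by simp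
    fix V :: "'v set" and E w \<epsilon> Ee we
    assume H: "wdhg k V E w \<and> 0 < \<epsilon> \<and> \<epsilon> < 1 \<and> is_sparsifier D P \<epsilon> V E w Ee we"
    have "Ee \<subseteq> E" using H by (auto simp: is_sparsifier_def)
    have "card E \<le> card Ee * k ^ k"
    proof (rule card_le_card_cover_mult_pow)
      show "finite Ee"
        using \<open>Ee \<subseteq> E\<close> H wdhg_finite_edges finite_subset by blast
      show "\<forall>f\<in>Ee. length f = k"
        using \<open>Ee \<subseteq> E\<close> H by (auto simp: wdhg_def)
      show "\<forall>e\<in>E. length e = k \<and> (\<exists>f\<in>Ee. set e \<subseteq> set f)"
      proof
        fix e assume e: "e \<in> E"
        then obtain f where "f \<in> Ee" "set f = set e"
          using H sparsifier_keeps_vertex_set[OF assms(4) b assms(5,6)] by blast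
        then show "length e = k \<and> (\<exists>f\<in>Ee. set e \<subseteq> set f)"
          using H e by (auto simp: wdhg_def)
      qed
    qed
    then have "real (card E) \<le> real (card Ee) * real k ^ k"
      by (metis of_nat_le_iff of_nat_mult of_nat_power)
    then show "real (card Ee) \<ge> 1 / real k ^ k * real (card E)"
      using k_pow_pos by (simp add: field_simps)
  qed
qed

end
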